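(* Let $k\ge 2$ and $\ell\ge 3$ be integers, and let $\Theta(k,\ell)$ be the graph consisting of two vertices $A$ and $B$ joined by $k$ internally vertex-disjoint paths, each of length $\ell$. Then $\mathrm{gp}(\Theta(k,\ell)) = k+1$.
   Context: All graphs are finite, simple and connected. A geodesic is a shortest path between its end-vertices. A set $S$ of vertices of a graph $G$ is a general position set if no three vertices of $S$ lie on a common geodesic of $G$ (i.e., there are no distinct $x,y,z\in S$ with $d_G(x,z)=d_G(x,y)+d_G(y,z)$). The general position number $\mathrm{gp}(G)$ is the maximum cardinality of a general position set of $G$. *)

theory Defs
  imports Main
begin

definition is_walk :: "('a \<Rightarrow> 'a \<Rightarrow> bool) \<Rightarrow> 'a set \<Rightarrow> 'a list \<Rightarrow> bool" where
  "is_walk E V xs \<longleftrightarrow> xs \<noteq> [] \<and> set xs \<subseteq> V \<and>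
     (\<forall>i. Suc i < length xs \<longrightarrow> E (xs ! i) (xs ! Suc i))"

definition gdist :: "('a \<Rightarrow> 'a \<Rightarrow> bool) \<Rightarrow> 'a set \<Rightarrow> 'a \<Rightarrow> 'a \<Rightarrow> nat" where
  "gdist E V x y = (LEAST n. \<exists>xs. is_walk E V xs \<and> hd xs = x \<and> last xs = y \<and> length xs = Suc n)"

definition gp_set :: "('a \<Rightarrow> 'a \<Rightarrow> bool) \<Rightarrow> 'a set \<Rightarrow> 'a set \<Rightarrow> bool" where
  "gp_set E V S \<longleftrightarrow> S \<subseteq> V \<and>
     (\<forall>x\<in>S. \<forall>y\<in>S. \<forall>z\<in>S. x \<noteq> y \<and> y \<noteq> z \<and> x \<noteq> z \<longrightarrow>
        gdist E V x z \<noteq> gdist E V x y + gdist E V y z)"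

definition gp_number :: "('a \<Rightarrow> 'a \<Rightarrow> bool) \<Rightarrow> 'a set \<Rightarrow> nat" where
  "gp_number E V = Max (card ` {S. gp_set E V S})"

text \<open>Vertices A, B and internal vertices Inner i j (path i < k, position 1 \<le> j \<le> l-1).
  Path i is A, Inner i 1, ..., Inner i (l-1), B.\<close>
datatype theta_vertex = TA | TB | Inner nat nat

definition theta_V :: "nat \<Rightarrow> nat \<Rightarrow> theta_vertex set" where
  "theta_V k l = {TA, TB} \<union> {Inner i j | i j. i < k \<and> 1 \<le> j \<and> j \<le> l - 1}"

definition theta_adj0 :: "nat \<Rightarrow> nat \<Rightarrow> theta_vertex \<Rightarrow> theta_vertex \<Rightarrow> bool" where
  "theta_adj0 k l u v \<longleftrightarrow> (\<exists>i<k.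
      (u = TA \<and> v = Inner i 1) \<or>
      (\<exists>j. 1 \<le> j \<and> j + 1 \<le> l - 1 \<and> u = Inner i j \<and> v = Inner i (j + 1)) \<or>
      (u = Inner i (l - 1) \<and> v = TB))"

definition theta_adj :: "nat \<Rightarrow> nat \<Rightarrow> theta_vertex \<Rightarrow> theta_vertex \<Rightarrow> bool" where
  "theta_adj k l u v \<longleftrightarrow> theta_adj0 k l u v \<or> theta_adj0 k l v u"

end

theory Submission imports Defs begin

text \<open>The distance between two vertices of \<Theta>(k,l) is explicit: along a common path it is the
  difference of the positions, and otherwise one goes round through A or through B. A general position
  set therefore cannot contain both A and B together with a third vertex, nor A (or B) together with
  two vertices of one path, nor three vertices of one path; and no two paths can each carry
  two vertices of the set, since one of the four would lie on a geodesic between two others. Hence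
  sending each vertex of the set to the index of its path, except A, B and the upper vertex of a path
  carrying two of them, which all go to k, is injective into {0..k}. The set consisting of A and the
  k neighbours of B attains k + 1.\<close>

lemma is_walk_snoc_iff:
  assumes "xs \<noteq> []"
  shows "is_walk E V (xs @ [x]) \<longleftrightarrow> is_walk E V xs \<and> E (last xs) x \<and> x \<in> V"
proof -
  obtain m where m: "length xs = Suc m" using assms by (cases xs) auto
  have "last xs = xs ! m" using assms m by (simp add: last_conv_nth)
  hence "(\<forall>i. Suc i < length (xs @ [x]) \<longrightarrow> E ((xs @ [x]) ! i) ((xs @ [x]) ! Suc i))
      \<longleftrightarrow> (\<forall>i. Suc i < length xs \<longrightarrow> E (xs ! i) (xs ! Suc i)) \<and> E (last xs) x"
    using m by (auto simp: nth_append less_Suc_eq)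
  thus ?thesis using assms unfolding is_walk_def by auto
qed

lemma walk_length_lower_bound:
  assumes step: "\<And>v w. v \<in> V \<Longrightarrow> w \<in> V \<Longrightarrow> E v w \<Longrightarrow> f w \<le> f v + 1"
    and start: "f u = 0"
    and walk: "is_walk E V xs" "hd xs = u"
  shows "f (last xs) + 1 \<le> length xs"
  using walk
proof (induction xs rule: rev_induct)
  case Nil
  thus ?case by (simp add: is_walk_def)
next
  case (snoc x xs)
  show ?case
  proof (cases "xs = []")
    case True
    thus ?thesis using snoc.prems start by simp
  next
    case False
    with snoc.prems have walk: "is_walk E V xs" "E (last xs) x" "x \<in> V" "hd xs = u"
      by (simp_all add: is_walk_snoc_iff)
    from walk(1) False have "last xs \<in> V" by (auto simp: is_walk_def)
    with walk step[of "last xs" x] snoc.IH show ?thesis by simp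
  qed
qed

lemma walk_of_predecessors:
  assumes pred: "\<And>v. v \<in> V \<Longrightarrow> v \<noteq> u \<Longrightarrow> \<exists>w\<in>V. E w v \<and> f w + 1 = f v"
    and start: "f u = 0" and "u \<in> V" and "v \<in> V"
  shows "\<exists>xs. is_walk E V xs \<and> hd xs = u \<and> last xs = v \<and> length xs = Suc (f v)"
  using \<open>v \<in> V\<close>
proof (induction "f v" arbitrary: v)
  case 0
  hence "v = u" using pred by fastforce
  thus ?case using 0 \<open>u \<in> V\<close> by (intro exI[of _ "[u]"]) (auto simp: is_walk_def)
next
  case (Suc n)
  obtain w where w: "w \<in> V" "E w v" "f w + 1 = f v"
    using pred[OF Suc.prems] Suc.hyps(2) start by fastforce
  then obtain xs where xs: "is_walk E V xs" "hd xs = u" "last xs = w" "length xs = Suc (f w)"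
    using Suc.hyps(1)[of w] Suc.hyps(2) by auto
  have "xs \<noteq> []" using xs(1) by (simp add: is_walk_def)
  with xs w Suc.prems show ?case
    by (intro exI[of _ "xs @ [v]"]) (auto simp: is_walk_snoc_iff)
qed

lemma gdist_eqI:
  assumes step: "\<And>v w. v \<in> V \<Longrightarrow> w \<in> V \<Longrightarrow> E v w \<Longrightarrow> f w \<le> f v + 1"
    and pred: "\<And>v. v \<in> V \<Longrightarrow> v \<noteq> u \<Longrightarrow> \<exists>w\<in>V. E w v \<and> f w + 1 = f v"
    and start: "f u = 0" and "u \<in> V" and "v \<in> V"
  shows "gdist E V u v = f v"
  unfolding gdist_def
proof (rule Least_equality)
  show "\<exists>xs. is_walk E V xs \<and> hd xs = u \<and> last xs = v \<and> length xs = Suc (f v)"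
    using walk_of_predecessors[OF pred start \<open>u \<in> V\<close> \<open>v \<in> V\<close>] .
next
  fix n
  assume "\<exists>xs. is_walk E V xs \<and> hd xs = u \<and> last xs = v \<and> length xs = Suc n"
  then obtain xs where "is_walk E V xs" "hd xs = u" "last xs = v" "length xs = Suc n"
    by blast
  with walk_length_lower_bound[of V E f u xs] step start show "f v \<le> n" by simp
qed

fun theta_pos :: "nat \<Rightarrow> theta_vertex \<Rightarrow> nat" where
  "theta_pos l TA = 0"
| "theta_pos l TB = l"
| "theta_pos l (Inner i j) = j"

fun on_common_path :: "theta_vertex \<Rightarrow> theta_vertex \<Rightarrow> bool" where
  "on_common_path (Inner i j) (Inner i' j') \<longleftrightarrow> i = i'"
| "on_common_path _ _ \<longleftrightarrow> True"

text \<open>On nat, (p - q) + (q - p) is the absolute difference of p and q.\<close>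

definition theta_dist :: "nat \<Rightarrow> theta_vertex \<Rightarrow> theta_vertex \<Rightarrow> nat" where
  "theta_dist l u v =
    (if on_common_path u v then (theta_pos l u - theta_pos l v) + (theta_pos l v - theta_pos l u)
     else min (theta_pos l u + theta_pos l v) (2 * l - theta_pos l u - theta_pos l v))"

lemma mem_theta_V:
  "v \<in> theta_V k l \<longleftrightarrow> v = TA \<or> v = TB \<or> (\<exists>i j. v = Inner i j \<and> i < k \<and> 1 \<le> j \<and> j \<le> l - 1)"
  unfolding theta_V_def by auto

lemma Inner_mem_theta_V [simp]: "Inner i j \<in> theta_V k l \<longleftrightarrow> i < k \<and> 1 \<le> j \<and> j \<le> l - 1"
  and TA_mem_theta_V [simp]: "TA \<in> theta_V k l"
  and TB_mem_theta_V [simp]: "TB \<in> theta_V k l"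
  unfolding theta_V_def by auto

lemma theta_dist_self [simp]: "theta_dist l u u = 0"
  by (cases u) (auto simp: theta_dist_def)

lemma theta_dist_adj0:
  assumes "l \<ge> 2" "u \<in> theta_V k l" "v \<in> theta_V k l" "w \<in> theta_V k l" "theta_adj0 k l v w"
  shows "theta_dist l u w \<le> theta_dist l u v + 1 \<and> theta_dist l u v \<le> theta_dist l u w + 1"
  using assms unfolding theta_adj0_def mem_theta_V
  by (auto simp: theta_dist_def split: if_splits)

lemma theta_dist_adj:
  assumes "l \<ge> 2" "u \<in> theta_V k l" "v \<in> theta_V k l" "w \<in> theta_V k l" "theta_adj k l v w"
  shows "theta_dist l u w \<le> theta_dist l u v + 1"
  using assms(5) theta_dist_adj0[OF assms(1-4)] theta_dist_adj0[OF assms(1,2,4,3)]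
  unfolding theta_adj_def by auto

lemma theta_dist_pred_TA:
  assumes "l \<ge> 2" "k > 0" "u \<in> theta_V k l" "u \<noteq> TA"
  shows "\<exists>w\<in>theta_V k l. theta_adj k l w TA \<and> theta_dist l u w + 1 = theta_dist l u TA"
proof (cases u)
  case TB
  thus ?thesis using assms
    by (intro bexI[of _ "Inner 0 1"]) (auto simp: theta_dist_def theta_adj_def theta_adj0_def)
next
  case (Inner i j)
  thus ?thesis using assms
    by (intro bexI[of _ "Inner i 1"]) (auto simp: theta_dist_def theta_adj_def theta_adj0_def)
qed (use assms in auto)

lemma theta_dist_pred_TB:
  assumes "l \<ge> 2" "k > 0" "u \<in> theta_V k l" "u \<noteq> TB"
  shows "\<exists>w\<in>theta_V k l. theta_adj k l w TB \<and> theta_dist l u w + 1 = theta_dist l u TB"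
proof (cases u)
  case TA
  thus ?thesis using assms
    by (intro bexI[of _ "Inner 0 (l - 1)"]) (auto simp: theta_dist_def theta_adj_def theta_adj0_def)
next
  case (Inner i j)
  thus ?thesis using assms
    by (intro bexI[of _ "Inner i (l - 1)"]) (auto simp: theta_dist_def theta_adj_def theta_adj0_def)
qed (use assms in auto)

definition path_prev :: "nat \<Rightarrow> nat \<Rightarrow> theta_vertex" where
  "path_prev i j = (if j = 1 then TA else Inner i (j - 1))"

definition path_next :: "nat \<Rightarrow> nat \<Rightarrow> nat \<Rightarrow> theta_vertex" where
  "path_next l i j = (if j = l - 1 then TB else Inner i (j + 1))"

lemma path_prev_adj:
  assumes "i < k" "1 \<le> j" "j \<le> l - 1"
  shows "path_prev i j \<in> theta_V k l" "theta_adj k l (path_prev i j) (Inner i j)"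
  using assms by (auto simp: path_prev_def theta_adj_def theta_adj0_def)

lemma path_next_adj:
  assumes "i < k" "1 \<le> j" "j \<le> l - 1"
  shows "path_next l i j \<in> theta_V k l" "theta_adj k l (path_next l i j) (Inner i j)"
  using assms by (auto simp: path_next_def theta_adj_def theta_adj0_def)

lemma theta_dist_pred_Inner:
  assumes "u \<in> theta_V k l" "u \<noteq> Inner i j" "i < k" "1 \<le> j" "j \<le> l - 1"
  shows "\<exists>w\<in>theta_V k l. theta_adj k l w (Inner i j) \<and> theta_dist l u w + 1 = theta_dist l u (Inner i j)"
proof (cases "u = TA \<or> (\<exists>j'. u = Inner i j' \<and> j' < j) \<or> (\<exists>i' j'. u = Inner i' j' \<and> i' \<noteq> i \<and> j + j' \<le> l)")
  case True
  hence "theta_dist l u (path_prev i j) + 1 = theta_dist l u (Inner i j)"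
    using assms by (auto simp: path_prev_def theta_dist_def)
  thus ?thesis using path_prev_adj[OF assms(3-5)] by blast
next
  case False
  hence "theta_dist l u (path_next l i j) + 1 = theta_dist l u (Inner i j)"
    using assms unfolding mem_theta_V by (auto simp: path_next_def theta_dist_def)
  thus ?thesis using path_next_adj[OF assms(3-5)] by blast
qed

lemma theta_dist_pred:
  assumes "l \<ge> 2" "k > 0" "u \<in> theta_V k l" "v \<in> theta_V k l" "v \<noteq> u"
  shows "\<exists>w\<in>theta_V k l. theta_adj k l w v \<and> theta_dist l u w + 1 = theta_dist l u v"
  using assms theta_dist_pred_TA theta_dist_pred_TB theta_dist_pred_Inner
  unfolding mem_theta_V[of v] by metis

lemma gdist_theta:
  assumes "l \<ge> 2" "k > 0" "u \<in> theta_V k l" "v \<in> theta_V k l"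
  shows "gdist (theta_adj k l) (theta_V k l) u v = theta_dist l u v"
  using assms theta_dist_adj theta_dist_pred by (intro gdist_eqI[where f = "theta_dist l u"]) auto

definition path_slot :: "nat \<Rightarrow> theta_vertex set \<Rightarrow> theta_vertex \<Rightarrow> nat" where
  "path_slot k S v =
    (case v of Inner i j \<Rightarrow> if \<exists>j'<j. Inner i j' \<in> S then k else i | _ \<Rightarrow> k)"

context
  fixes k l :: nat and S :: "theta_vertex set"
  assumes l: "l \<ge> 2" and k: "k > 0" and gp: "gp_set (theta_adj k l) (theta_V k l) S"
begin

lemma gp_subset_theta_V: "S \<subseteq> theta_V k l"
  using gp unfolding gp_set_def by auto

lemma gp_Inner_bounds: "Inner i j \<in> S \<Longrightarrow> i < k \<and> 1 \<le> j \<and> j \<le> l - 1"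
  using gp_subset_theta_V by auto

lemma gp_theta_dist:
  assumes "x \<in> S" "y \<in> S" "z \<in> S" "x \<noteq> y" "y \<noteq> z" "x \<noteq> z"
  shows "theta_dist l x z \<noteq> theta_dist l x y + theta_dist l y z"
  using assms gp gdist_theta[OF l k] gp_subset_theta_V unfolding gp_set_def by (metis subsetD)

lemma gp_TA_TB_only: "TA \<in> S \<Longrightarrow> TB \<in> S \<Longrightarrow> S \<subseteq> {TA, TB}"
proof
  fix w assume "TA \<in> S" "TB \<in> S" "w \<in> S"
  show "w \<in> {TA, TB}"
  proof (cases w)
    case (Inner i j)
    with gp_theta_dist[of TA w TB] gp_Inner_bounds[of i j] \<open>TA \<in> S\<close> \<open>TB \<in> S\<close> \<open>w \<in> S\<close>
    show ?thesis by (auto simp: theta_dist_def)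
  qed simp_all
qed

lemma gp_TA_path_unique: "TA \<in> S \<Longrightarrow> Inner i a \<in> S \<Longrightarrow> Inner i b \<in> S \<Longrightarrow> a = b"
  using gp_theta_dist[of TA "Inner i a" "Inner i b"] gp_theta_dist[of TA "Inner i b" "Inner i a"]
    gp_Inner_bounds[of i a] gp_Inner_bounds[of i b]
  by (cases a b rule: linorder_cases) (auto simp: theta_dist_def)

lemma gp_TB_path_unique: "TB \<in> S \<Longrightarrow> Inner i a \<in> S \<Longrightarrow> Inner i b \<in> S \<Longrightarrow> a = b"
  using gp_theta_dist[of TB "Inner i a" "Inner i b"] gp_theta_dist[of TB "Inner i b" "Inner i a"]
    gp_Inner_bounds[of i a] gp_Inner_bounds[of i b]
  by (cases a b rule: linorder_cases) (auto simp: theta_dist_def)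

lemma gp_not_three_on_path:
  "Inner i a \<in> S \<Longrightarrow> Inner i b \<in> S \<Longrightarrow> Inner i c \<in> S \<Longrightarrow> a < b \<Longrightarrow> b < c \<Longrightarrow> False"
  using gp_theta_dist[of "Inner i a" "Inner i b" "Inner i c"] by (auto simp: theta_dist_def)

text \<open>If a + d \<ge> l then b lies on a geodesic from a to d through B; if a + d \<le> l then c lies
  on a geodesic from d to a through A.\<close>

lemma gp_not_two_double_paths:
  assumes "Inner i a \<in> S" "Inner i b \<in> S" "Inner i' c \<in> S" "Inner i' d \<in> S"
    and "i \<noteq> i'" "a < b" "c < d"
  shows False
proof -
  note bounds = gp_Inner_bounds[OF assms(1)] gp_Inner_bounds[OF assms(2)]
    gp_Inner_bounds[OF assms(3)] gp_Inner_bounds[OF assms(4)]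
  have "a + d < l"
    using gp_theta_dist[OF assms(1,2,4)] assms bounds by (auto simp: theta_dist_def)
  moreover have "a + d > l"
    using gp_theta_dist[OF assms(4,3,1)] assms bounds by (auto simp: theta_dist_def)
  ultimately show False by simp
qed

lemma path_slot_le: "v \<in> S \<Longrightarrow> path_slot k S v \<le> k"
  using gp_Inner_bounds by (cases v) (auto simp: path_slot_def less_imp_le)

lemma path_slot_less_k:
  assumes "v \<in> S" "path_slot k S v < k"
  shows "\<exists>j. v = Inner (path_slot k S v) j \<and> (\<forall>j'<j. Inner (path_slot k S v) j' \<notin> S)"
  using assms by (cases v) (auto simp: path_slot_def split: if_splits)

lemma path_slot_eq_k:
  assumes "v \<in> S" "path_slot k S v = k"
  shows "v = TA \<or> v = TB \<or> (\<exists>i a b. v = Inner i b \<and> a < b \<and> Inner i a \<in> S)"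
  using assms gp_Inner_bounds by (cases v) (auto simp: path_slot_def split: if_splits)

lemma path_slot_inj_on:
  assumes "\<not> (TA \<in> S \<and> TB \<in> S)"
  shows "inj_on (path_slot k S) S"
proof (rule inj_onI)
  fix v w
  assume v: "v \<in> S" and w: "w \<in> S" and eq: "path_slot k S v = path_slot k S w"
  show "v = w"
  proof (cases "path_slot k S v < k")
    case True
    then obtain i a b where "v = Inner i a" "w = Inner i b"
      and "\<forall>j<a. Inner i j \<notin> S" "\<forall>j<b. Inner i j \<notin> S"
      using path_slot_less_k[OF v] path_slot_less_k[OF w] eq by metis
    with v w show ?thesis by (metis linorder_neqE_nat)
  next
    case False
    hence "path_slot k S v = k" "path_slot k S w = k"
      using path_slot_le[OF v] eq by auto
    with path_slot_eq_k v w assms gp_TA_path_unique gp_TB_path_unique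
      gp_not_three_on_path gp_not_two_double_paths
    show ?thesis by (metis linorder_neqE_nat)
  qed
qed

lemma gp_card_le: "card S \<le> k + 1"
proof (cases "TA \<in> S \<and> TB \<in> S")
  case True
  hence "card S \<le> card {TA, TB}" using gp_TA_TB_only by (intro card_mono) auto
  also have "\<dots> \<le> k + 1" using k by (simp add: card_insert_if)
  finally show ?thesis .
next
  case False
  have "path_slot k S ` S \<subseteq> {..k}" using path_slot_le by auto
  from card_inj_on_le[OF path_slot_inj_on[OF False] this] show ?thesis by simp
qed

end

lemma finite_theta_V: "finite (theta_V k l)"
proof -
  have "theta_V k l \<subseteq> {TA, TB} \<union> case_prod Inner ` ({..<k} \<times> {..<l})"
    unfolding theta_V_def by auto
  thus ?thesis by (rule finite_subset) auto
qed

lemma gp_set_TA_and_B_neighbours: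
  assumes "l \<ge> 3"
  shows "gp_set (theta_adj k l) (theta_V k l) (insert TA ((\<lambda>i. Inner i (l - 1)) ` {..<k}))"
    (is "gp_set _ _ ?S")
proof (cases "k = 0")
  case True
  thus ?thesis by (simp add: gp_set_def)
next
  case False
  have sub: "?S \<subseteq> theta_V k l" using assms by auto
  have "gdist (theta_adj k l) (theta_V k l) x z \<noteq>
        gdist (theta_adj k l) (theta_V k l) x y + gdist (theta_adj k l) (theta_V k l) y z"
    if "x \<in> ?S" "y \<in> ?S" "z \<in> ?S" "x \<noteq> y" "y \<noteq> z" "x \<noteq> z" for x y z
  proof -
    have "x \<in> theta_V k l" "y \<in> theta_V k l" "z \<in> theta_V k l" using that sub by auto
    with assms False have "gdist (theta_adj k l) (theta_V k l) u v = theta_dist l u v"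
      if "u \<in> {x, y, z}" "v \<in> {x, y, z}" for u v
      using that by (intro gdist_theta) auto
    with that assms show ?thesis by (auto simp: theta_dist_def)
  qed
  with sub show ?thesis unfolding gp_set_def by blast
qed

theorem proposition2p1:
  fixes k l :: nat
  assumes "k \<ge> 2" and "l \<ge> 3"
  shows "gp_number (theta_adj k l) (theta_V k l) = k + 1"
  unfolding gp_number_def
proof (rule Max_eqI)
  have "{S. gp_set (theta_adj k l) (theta_V k l) S} \<subseteq> Pow (theta_V k l)"
    unfolding gp_set_def by auto
  thus "finite (card ` {S. gp_set (theta_adj k l) (theta_V k l) S})"
    using finite_theta_V by (meson finite_Pow_iff finite_imageI finite_subset)
next
  fix n assume "n \<in> card ` {S. gp_set (theta_adj k l) (theta_V k l) S}"
  thus "n \<le> k + 1" using gp_card_le[of l k] assms by auto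
next
  let ?S = "insert TA ((\<lambda>i. Inner i (l - 1)) ` {..<k})"
  have "card ?S = k + 1"
    by (subst card_insert_disjoint) (auto simp: card_image inj_on_def)
  with gp_set_TA_and_B_neighbours[OF assms(2)]
  show "k + 1 \<in> card ` {S. gp_set (theta_adj k l) (theta_V k l) S}" by force
qed

end
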